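(* Let $r\ge 1$ be an integer, $\overline{x}\in\mathbb{R}^n$, and let $f:\mathbb{R}^n\to\mathbb{R}$ be of class $C^r$ on a neighbourhood of $\overline{x}$. Assume that $T^{r-1}f(\overline{x})$ is the constant polynomial $f(\overline{x})$, and that $\nabla\big(T^rf(\overline{x})\big)(x)=0$ if and only if $x=\overline{x}$. Then there exist $c>0$ and $\delta>0$ such that $$\|\nabla f(x)\|\ge c\,\|x-\overline{x}\|^{r-1}\quad\text{for all }x\in\mathbb{B}_\delta(\overline{x}).$$ Consequently: (a) $f$ has a local minimum at $\overline{x}$ if and only if $T^rf(\overline{x})$ has a local minimum at $\overline{x}$; and (b) if $f$ has a local minimum at $\overline{x}$, then there exists $\epsilon>0$ such that for every function $h:\mathbb{R}^n\to\mathbb{R}$ for which there is $\rho>0$ with $|h(x)-h(\overline{x})|\le\epsilon\,\|x-\overline{x}\|^r$ for all $x\in\mathbb{B}_\rho(\overline{x})$, the function $f+h$ has a local minimum at $\overline{x}$.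
   Context: $\mathbb{B}_\delta(x)$ denotes the closed Euclidean ball of radius $\delta$ centered at $x$. We use the convention $t^0=1$ for all $t\ge 0$. For $k\le r$, $T^kf(\overline{x})$ denotes the $k$th Taylor polynomial of $f$ at $\overline{x}$: $T^kf(\overline{x})(x)=\sum_{j=0}^k\frac{1}{j!}\sum_{i_1,\dots,i_j=1}^n\frac{\partial^j f}{\partial x_{i_1}\cdots\partial x_{i_j}}(\overline{x})(x_{i_1}-\overline{x}_{i_1})\cdots(x_{i_j}-\overline{x}_{i_j})$. *)

theory Defs
  imports "HOL-Analysis.Analysis"
begin

definition pd :: "'n::finite \<Rightarrow> (real^'n \<Rightarrow> real) \<Rightarrow> real^'n \<Rightarrow> real" where
  "pd i g x = deriv (\<lambda>t. g (x + t *\<^sub>R axis i 1)) 0"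

fun pds :: "'n::finite list \<Rightarrow> (real^'n \<Rightarrow> real) \<Rightarrow> real^'n \<Rightarrow> real" where
  "pds [] g = g"
| "pds (i # is) g = pd i (pds is g)"

definition Cr_on :: "nat \<Rightarrow> (real^'n::finite \<Rightarrow> real) \<Rightarrow> (real^'n) set \<Rightarrow> bool" where
  "Cr_on r f U \<longleftrightarrow> open U \<and>
     (\<forall>is i x. length is < r \<longrightarrow> x \<in> U \<longrightarrow>
        (\<lambda>t. pds is f (x + t *\<^sub>R axis i 1)) differentiable (at 0)) \<and>
     (\<forall>is. length is \<le> r \<longrightarrow> continuous_on U (pds is f))"

definition grad :: "(real^'n::finite \<Rightarrow> real) \<Rightarrow> real^'n \<Rightarrow> real^'n" where
  "grad g x = (\<chi> i. pd i g x)"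

definition taylor :: "nat \<Rightarrow> (real^'n::finite \<Rightarrow> real) \<Rightarrow> real^'n \<Rightarrow> real^'n \<Rightarrow> real" where
  "taylor k f xb x = (\<Sum>j\<le>k. (1 / fact j) *
      (\<Sum>is\<in>{is :: 'n list. length is = j}.
          pds is f xb * (\<Prod>l<j. x $ (is ! l) - xb $ (is ! l))))"

definition local_min_at :: "(real^'n::finite \<Rightarrow> real) \<Rightarrow> real^'n \<Rightarrow> bool" where
  "local_min_at g xb \<longleftrightarrow> (\<exists>\<delta>>0. \<forall>x\<in>cball xb \<delta>. g xb \<le> g x)"

end

theory Submission
  imports Defs
begin

text \<open>
Write \<open>H(v) = d^r f(xb)[v,...,v] / r!\<close>; since the lower Taylor terms vanish,
\<open>T^r f(xb)(x) = f(xb) + H(x - xb)\<close>. By Schwarz's theorem the \<open>r\<close>-th partial derivatives at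
\<open>xb\<close> are symmetric, so the gradient \<open>G\<close> of \<open>H\<close> is the form of degree \<open>r - 1\<close> built from
them, and \<open>G\<close> is also the leading Taylor term of \<open>grad f\<close>. Taylor's theorem with Peano
remainder gives \<open>f(x) = f(xb) + H(x - xb) + o(|x - xb|^r)\<close> and
\<open>grad f(x) = G(x - xb) + o(|x - xb|^(r-1))\<close>. As \<open>G\<close> vanishes only at \<open>0\<close>, homogeneity and
compactness of the unit sphere give \<open>|G(v)| >= c |v|^(r-1)\<close>, whence the gradient estimate.
If \<open>H >= 0\<close>, then \<open>H\<close> cannot vanish at some \<open>v /= 0\<close>, which would be a minimum of \<open>H\<close> with
\<open>G(v) /= 0\<close>; so \<open>H(v) >= c |v|^r\<close>, and this dominates both the remainder and every
perturbation \<open>h\<close> with \<open>|h(x) - h(xb)| <= (c/2) |x - xb|^r\<close>. If instead \<open>H(v) < 0\<close>, then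
\<open>f(xb + t v) < f(xb)\<close> for small \<open>t > 0\<close>.
\<close>

section \<open>Homogeneous forms\<close>

definition tensor_form :: "('n::finite list \<Rightarrow> real) \<Rightarrow> nat \<Rightarrow> real^'n \<Rightarrow> real" where
  "tensor_form c m v = (\<Sum>ks\<in>{ks. length ks = m}. c ks * (\<Prod>l<m. v $ (ks ! l)))"

lemma finite_lists_of_length: "finite {ks :: 'n::finite list. length ks = m}"
  using finite_lists_length_eq[of "UNIV :: 'n set" m] by simp

lemma sum_lists_of_length_Suc:
  "(\<Sum>ks\<in>{ks :: 'n::finite list. length ks = Suc m}. F ks) = (\<Sum>a\<in>UNIV. \<Sum>ks\<in>{ks. length ks = m}. F (a # ks))"
proof -
  have lists: "{ks :: 'n list. length ks = Suc m} = (\<lambda>(a, ks). a # ks) ` (UNIV \<times> {ks. length ks = m})"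
    by (auto simp: length_Suc_conv image_def)
  have "inj_on (\<lambda>(a, ks). a # ks) (UNIV \<times> {ks :: 'n list. length ks = m})"
    by (auto simp: inj_on_def)
  then show ?thesis
    unfolding lists by (simp add: sum.reindex sum.cartesian_product case_prod_unfold)
qed

lemma tensor_form_0 [simp]: "tensor_form c 0 v = c []"
  by (simp add: tensor_form_def)

lemma tensor_form_Suc:
  "tensor_form c (Suc m) v = (\<Sum>a\<in>UNIV. v $ a * tensor_form (\<lambda>ks. c (a # ks)) m v)"
  unfolding tensor_form_def sum_lists_of_length_Suc
  by (simp add: prod.lessThan_Suc_shift sum_distrib_left mult_ac del: prod.lessThan_Suc)

lemma tensor_form_scaleR: "tensor_form c m (t *\<^sub>R v) = t ^ m * tensor_form c m v"
  by (simp add: tensor_form_def prod.distrib sum_distrib_left mult_ac)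

lemma continuous_on_tensor_form [continuous_intros]: "continuous_on S (tensor_form c m)"
  unfolding tensor_form_def by (intro continuous_intros)

lemma tensor_form_diff_le:
  fixes c1 c2 :: "'n::finite list \<Rightarrow> real"
  assumes "\<And>ks. length ks = m \<Longrightarrow> \<bar>c1 ks - c2 ks\<bar> \<le> e"
  shows "\<bar>tensor_form c1 m v - tensor_form c2 m v\<bar>
           \<le> real (card {ks :: 'n list. length ks = m}) * e * norm v ^ m"
proof -
  have monomial_le: "\<bar>\<Prod>l<m. v $ (ks ! l)\<bar> \<le> norm v ^ m" for ks
  proof -
    have "\<bar>\<Prod>l<m. v $ (ks ! l)\<bar> = (\<Prod>l<m. \<bar>v $ (ks ! l)\<bar>)"
      by (simp add: abs_prod)
    also have "\<dots> \<le> (\<Prod>l<m. norm v)"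
      by (intro prod_mono) (auto simp: component_le_norm_cart)
    finally show ?thesis by simp
  qed
  have "\<bar>tensor_form c1 m v - tensor_form c2 m v\<bar>
      = \<bar>\<Sum>ks\<in>{ks. length ks = m}. (c1 ks - c2 ks) * (\<Prod>l<m. v $ (ks ! l))\<bar>"
    by (simp add: tensor_form_def sum_subtractf left_diff_distrib)
  also have "\<dots> \<le> (\<Sum>ks\<in>{ks. length ks = m}. \<bar>(c1 ks - c2 ks) * (\<Prod>l<m. v $ (ks ! l))\<bar>)"
    by (rule sum_abs)
  also have "\<dots> \<le> (\<Sum>ks\<in>{ks :: 'n list. length ks = m}. e * norm v ^ m)"
    unfolding abs_mult
    by (intro sum_mono mult_mono') (auto simp: assms monomial_le)
  finally show ?thesis by simp
qed

lemma sum_axis_mult: "(\<Sum>a\<in>UNIV. axis i (1::real) $ a * F a) = F i"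
proof -
  have "axis i (1::real) $ a * F a = (if a = i then F a else 0)" for a
    by (simp add: axis_def)
  then show ?thesis by (simp add: sum.delta)
qed

definition symmetric_upto :: "nat \<Rightarrow> ('a list \<Rightarrow> 'b) \<Rightarrow> bool" where
  "symmetric_upto k c \<longleftrightarrow>
     (\<forall>p a b s. length p + length s + 2 \<le> k \<longrightarrow> c (p @ a # b # s) = c (p @ b # a # s))"

lemma symmetric_upto_mono: "symmetric_upto k c \<Longrightarrow> j \<le> k \<Longrightarrow> symmetric_upto j c"
  unfolding symmetric_upto_def by auto

lemma symmetric_upto_Cons:
  fixes c :: "'a list \<Rightarrow> 'b"
  assumes "symmetric_upto (Suc k) c"
  shows "symmetric_upto k (\<lambda>ks. c (a # ks))"
  unfolding symmetric_upto_def
proof (intro allI impI)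
  fix p :: "'a list" and b b' :: 'a and s :: "'a list"
  assume "length p + length s + 2 \<le> k"
  then show "c (a # p @ b # b' # s) = c (a # p @ b' # b # s)"
    using assms[unfolded symmetric_upto_def, rule_format, of "a # p" s b b'] by simp
qed

lemma symmetric_upto_snoc_eq_Cons:
  "symmetric_upto k c \<Longrightarrow> length p < k \<Longrightarrow> c (p @ [a]) = c (a # p)"
proof (induction p arbitrary: c k)
  case Nil
  then show ?case by simp
next
  case (Cons x p)
  then obtain k' where k: "k = Suc k'" by (cases k) auto
  have "c (x # p @ [a]) = c (x # a # p)"
    using Cons.IH[of k' "\<lambda>ks. c (x # ks)"] symmetric_upto_Cons[of k' c x] Cons.prems k by simp
  also have "\<dots> = c (a # x # p)"
    using Cons.prems(1)[unfolded symmetric_upto_def, rule_format, of "[]" p x a] Cons.prems(2)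
    by simp
  finally show ?case by simp
qed

text \<open>Symmetry of \<open>c\<close> moves the differentiated index from the front of the list to its end.\<close>

lemma tensor_form_has_derivative_axis:
  fixes c :: "'n::finite list \<Rightarrow> real"
  assumes "symmetric_upto (Suc m) c"
  shows "((\<lambda>s. tensor_form c (Suc m) (v + s *\<^sub>R axis i 1)) has_field_derivative
            real (Suc m) * tensor_form (\<lambda>ks. c (ks @ [i])) m v) (at 0)"
  using assms
proof (induction m arbitrary: c)
  case 0
  have "((\<lambda>s. tensor_form c 1 (v + s *\<^sub>R axis i 1)) has_field_derivative
          (\<Sum>a\<in>UNIV. axis i 1 $ a * c [a])) (at 0)"
    unfolding One_nat_def tensor_form_Suc
    by (auto intro!: derivative_eq_intros)
  then show ?case
    by (simp add: sum_axis_mult)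
next
  case (Suc m)
  have IH: "((\<lambda>s. tensor_form (\<lambda>ks. c (a # ks)) (Suc m) (v + s *\<^sub>R axis i 1)) has_field_derivative
       real (Suc m) * tensor_form (\<lambda>ks. c (a # ks @ [i])) m v) (at 0)" for a
    using Suc.IH[of "\<lambda>ks. c (a # ks)"] symmetric_upto_Cons[OF Suc.prems] by simp
  have "((\<lambda>s. tensor_form c (Suc (Suc m)) (v + s *\<^sub>R axis i 1)) has_field_derivative
       (\<Sum>a\<in>UNIV. axis i 1 $ a * tensor_form (\<lambda>ks. c (a # ks)) (Suc m) v
          + v $ a * (real (Suc m) * tensor_form (\<lambda>ks. c (a # ks @ [i])) m v))) (at 0)"
    unfolding tensor_form_Suc[of c "Suc m"]
    by (intro DERIV_sum DERIV_cong[OF DERIV_mult[OF _ IH]])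
       (auto intro!: derivative_eq_intros)
  moreover have "(\<Sum>a\<in>UNIV. axis i 1 $ a * tensor_form (\<lambda>ks. c (a # ks)) (Suc m) v
          + v $ a * (real (Suc m) * tensor_form (\<lambda>ks. c (a # ks @ [i])) m v))
      = tensor_form (\<lambda>ks. c (i # ks)) (Suc m) v + real (Suc m) * tensor_form (\<lambda>ks. c (ks @ [i])) (Suc m) v"
    by (simp add: sum.distrib sum_axis_mult tensor_form_Suc[of "\<lambda>ks. c (ks @ [i])" m]
        sum_distrib_left mult_ac)
  moreover have "tensor_form (\<lambda>ks. c (i # ks)) (Suc m) v = tensor_form (\<lambda>ks. c (ks @ [i])) (Suc m) v"
    unfolding tensor_form_def
    by (intro sum.cong refl) (simp add: symmetric_upto_snoc_eq_Cons[OF Suc.prems])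
  ultimately show ?case
    by (simp add: algebra_simps)
qed

section \<open>Partial derivatives of \<open>C\<^sup>r\<close> functions\<close>

lemma pds_append: "pds (xs @ ys) g = pds xs (pds ys g)"
  by (induction xs) auto

lemma Cr_on_pds:
  assumes "Cr_on r f U" and "length ks + k \<le> r"
  shows "Cr_on k (pds ks f) U"
  using assms unfolding Cr_on_def pds_append[symmetric] by auto

lemma Cr_on_open: "Cr_on r f U \<Longrightarrow> open U"
  by (simp add: Cr_on_def)

lemma Cr_on_continuous_on_pds: "Cr_on r f U \<Longrightarrow> length ks \<le> r \<Longrightarrow> continuous_on U (pds ks f)"
  by (simp add: Cr_on_def)

lemma Cr_on_1_has_field_derivative_pd:
  assumes "Cr_on 1 g U" and "z + t *\<^sub>R axis i 1 \<in> U"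
  shows "((\<lambda>t. g (z + t *\<^sub>R axis i 1)) has_field_derivative pd i g (z + t *\<^sub>R axis i 1)) (at t)"
proof -
  define y where "y = z + t *\<^sub>R axis i 1"
  have "(\<lambda>s. g (y + s *\<^sub>R axis i 1)) differentiable (at 0)"
    using assms by (auto simp: Cr_on_def y_def)
  then have "((\<lambda>s. g (y + s *\<^sub>R axis i 1)) has_field_derivative pd i g y) (at 0)"
    unfolding pd_def using DERIV_deriv_iff_real_differentiable by blast
  moreover have "(\<lambda>s. g (y + s *\<^sub>R axis i 1)) = (\<lambda>s. g (z + (s + t) *\<^sub>R axis i 1))"
    by (simp add: y_def scaleR_add_left algebra_simps)
  ultimately have "((\<lambda>t. g (z + t *\<^sub>R axis i 1)) has_field_derivative pd i g y) (at (0 + t))"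
    unfolding DERIV_shift by simp
  then show ?thesis by (simp add: y_def)
qed

lemma mean_value_symmetric:
  fixes F :: "real \<Rightarrow> real"
  assumes "\<And>t. \<bar>t\<bar> \<le> \<bar>s\<bar> \<Longrightarrow> (F has_field_derivative F' t) (at t)"
  shows "\<exists>\<tau>. \<bar>\<tau>\<bar> \<le> \<bar>s\<bar> \<and> F s - F 0 = s * F' \<tau>"
proof (cases s "0 :: real" rule: linorder_cases)
  case less
  with MVT2[of s 0 F F'] assms obtain z where "s < z" "z < 0" "F 0 - F s = (0 - s) * F' z"
    by auto
  then show ?thesis by (intro exI[of _ z]) (auto simp: algebra_simps)
next
  case greater
  with MVT2[of 0 s F F'] assms obtain z where "0 < z" "z < s" "F s - F 0 = (s - 0) * F' z"
    by auto
  then show ?thesis by (intro exI[of _ z]) auto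
qed auto

lemma eventually_nhds_continuous_family:
  fixes F :: "'j \<Rightarrow> 'a::metric_space \<Rightarrow> 'b::metric_space"
  assumes "open U" "x \<in> U" "finite J" "\<And>j. j \<in> J \<Longrightarrow> continuous_on U (F j)" "e > 0"
  shows "\<forall>\<^sub>F z in nhds x. z \<in> U \<and> (\<forall>j\<in>J. dist (F j z) (F j x) < e)"
proof (rule eventually_conj)
  show "\<forall>\<^sub>F z in nhds x. z \<in> U"
    using assms by (simp add: eventually_nhds_in_open)
  show "\<forall>\<^sub>F z in nhds x. \<forall>j\<in>J. dist (F j z) (F j x) < e"
  proof (rule eventually_ball_finite[OF \<open>finite J\<close>], rule ballI)
    fix j assume "j \<in> J"
    then have "(F j \<longlongrightarrow> F j x) (nhds x)"
      using assms by (simp add: continuous_on_eq_continuous_at isCont_def tendsto_at_iff_tendsto_nhds)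
    then show "\<forall>\<^sub>F z in nhds x. dist (F j z) (F j x) < e"
      using \<open>e > 0\<close> by (rule tendstoD)
  qed
qed

text \<open>The increment from \<open>y\<close> to \<open>y + h\<close> is telescoped over the coordinates in \<open>S\<close>,
  each step by the mean value theorem.\<close>

lemma increment_le_partials:
  fixes g :: "real^'n::finite \<Rightarrow> real"
  assumes g: "Cr_on 1 g U" and ball: "ball y d \<subseteq> U"
    and close: "\<And>z i. z \<in> ball y d \<Longrightarrow> \<bar>pd i g z - pd i g y\<bar> \<le> e"
    and h: "norm h < d" and "finite S"
  shows "\<bar>g (y + (\<chi> j. if j \<in> S then h $ j else 0)) - g y - (\<Sum>i\<in>S. h $ i * pd i g y)\<bar>
           \<le> real (card S) * e * norm h"
  using \<open>finite S\<close>
proof (induction S rule: finite_induct)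
  case empty
  have "(\<chi> j. if j \<in> {} then h $ j else 0) = 0" by (simp add: vec_eq_iff)
  then show ?case by simp
next
  case (insert a S)
  define w where "w = y + (\<chi> j. if j \<in> S then h $ j else 0)"
  have step: "y + (\<chi> j. if j \<in> insert a S then h $ j else 0) = w + h $ a *\<^sub>R axis a 1"
    using insert.hyps by (auto simp: w_def vec_eq_iff axis_def)
  have near: "w + t *\<^sub>R axis a 1 \<in> ball y d" if "\<bar>t\<bar> \<le> \<bar>h $ a\<bar>" for t
  proof -
    have "norm ((\<chi> j. if j \<in> S then h $ j else 0) + t *\<^sub>R axis a 1) \<le> norm h"
      by (rule norm_le_componentwise_cart) (use that insert.hyps in \<open>auto simp: axis_def\<close>)
    moreover have "dist (w + t *\<^sub>R axis a 1) y = norm ((\<chi> j. if j \<in> S then h $ j else 0) + t *\<^sub>R axis a 1)"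
      by (simp add: w_def dist_norm)
    ultimately show ?thesis
      using h unfolding mem_ball dist_commute[of y] by linarith
  qed
  have "((\<lambda>t. g (w + t *\<^sub>R axis a 1)) has_field_derivative pd a g (w + t *\<^sub>R axis a 1)) (at t)"
    if "\<bar>t\<bar> \<le> \<bar>h $ a\<bar>" for t
    using Cr_on_1_has_field_derivative_pd[OF g] near[OF that] ball by blast
  from mean_value_symmetric[OF this]
  obtain \<tau> where \<tau>: "\<bar>\<tau>\<bar> \<le> \<bar>h $ a\<bar>"
    and mvt: "g (w + h $ a *\<^sub>R axis a 1) - g w = h $ a * pd a g (w + \<tau> *\<^sub>R axis a 1)"
    by auto
  have "\<bar>h $ a * (pd a g (w + \<tau> *\<^sub>R axis a 1) - pd a g y)\<bar> \<le> norm h * e"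
    unfolding abs_mult
    by (intro mult_mono) (use close[OF near[OF \<tau>]] component_le_norm_cart in auto)
  moreover have "g (y + (\<chi> j. if j \<in> insert a S then h $ j else 0)) - g y - (\<Sum>i\<in>insert a S. h $ i * pd i g y)
      = h $ a * (pd a g (w + \<tau> *\<^sub>R axis a 1) - pd a g y) + (g w - g y - (\<Sum>i\<in>S. h $ i * pd i g y))"
    using insert.hyps step mvt by (simp add: algebra_simps)
  ultimately show ?case
    using insert.IH insert.hyps unfolding w_def[symmetric] by (simp add: algebra_simps)
qed

lemma Cr_on_1_has_derivative:
  fixes g :: "real^'n::finite \<Rightarrow> real"
  assumes g: "Cr_on 1 g U" and y: "y \<in> U"
  shows "(g has_derivative (\<lambda>h. \<Sum>i\<in>UNIV. h $ i * pd i g y)) (at y)"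
  unfolding has_derivative_at_alt
proof (intro conjI allI impI)
  show "bounded_linear (\<lambda>h. \<Sum>i\<in>UNIV. h $ i * pd i g y)"
    by (auto intro!: bounded_linear_intros)
next
  fix e :: real assume "e > 0"
  define e' where "e' = e / real CARD('n)"
  have "e' > 0" using \<open>e > 0\<close> by (simp add: e'_def)
  have "continuous_on U (pd i g)" for i
    using Cr_on_continuous_on_pds[OF g, of "[i]"] by simp
  then have "\<forall>\<^sub>F z in nhds y. z \<in> U \<and> (\<forall>i\<in>UNIV. dist (pd i g z) (pd i g y) < e')"
    using Cr_on_open[OF g] y \<open>e' > 0\<close> by (intro eventually_nhds_continuous_family) auto
  then obtain d where "d > 0" and d: "\<And>z. dist z y < d \<Longrightarrow> z \<in> U \<and> (\<forall>i. dist (pd i g z) (pd i g y) < e')"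
    unfolding eventually_nhds_metric by auto
  have ball: "ball y d \<subseteq> U" and close: "\<And>z i. z \<in> ball y d \<Longrightarrow> \<bar>pd i g z - pd i g y\<bar> \<le> e'"
    using d by (auto simp: dist_commute dist_real_def less_imp_le)
  show "\<exists>d>0. \<forall>z. norm (z - y) < d \<longrightarrow>
      norm (g z - g y - (\<Sum>i\<in>UNIV. (z - y) $ i * pd i g y)) \<le> e * norm (z - y)"
  proof (intro exI[of _ d] conjI allI impI)
    fix z assume "norm (z - y) < d"
    have "(\<chi> j. if j \<in> UNIV then (z - y) $ j else 0) = z - y"
      by (simp add: vec_eq_iff)
    then have "\<bar>g z - g y - (\<Sum>i\<in>UNIV. (z - y) $ i * pd i g y)\<bar> \<le> real CARD('n) * e' * norm (z - y)"
      using increment_le_partials[OF g ball close \<open>norm (z - y) < d\<close>, of UNIV] by simp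
    then show "norm (g z - g y - (\<Sum>i\<in>UNIV. (z - y) $ i * pd i g y)) \<le> e * norm (z - y)"
      by (simp add: e'_def)
  qed fact
qed

lemma Cr_on_1_has_field_derivative_along_line:
  fixes g :: "real^'n::finite \<Rightarrow> real"
  assumes "Cr_on 1 g U" and "y + t *\<^sub>R v \<in> U"
  shows "((\<lambda>t. g (y + t *\<^sub>R v)) has_field_derivative (\<Sum>i\<in>UNIV. v $ i * pd i g (y + t *\<^sub>R v))) (at t)"
proof -
  have "((\<lambda>t. y + t *\<^sub>R v) has_derivative (\<lambda>s. s *\<^sub>R v)) (at t)"
    by (auto intro!: derivative_eq_intros)
  from has_derivative_compose[OF this Cr_on_1_has_derivative[OF assms]]
  have "((\<lambda>t. g (y + t *\<^sub>R v)) has_derivative (\<lambda>s. \<Sum>i\<in>UNIV. (s *\<^sub>R v) $ i * pd i g (y + t *\<^sub>R v))) (at t)" .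
  moreover have "(\<lambda>s. \<Sum>i\<in>UNIV. (s *\<^sub>R v) $ i * pd i g (y + t *\<^sub>R v))
      = (\<lambda>s. (\<Sum>i\<in>UNIV. v $ i * pd i g (y + t *\<^sub>R v)) * s)"
    by (simp add: fun_eq_iff sum_distrib_left mult_ac)
  ultimately show ?thesis by (simp add: has_field_derivative_def)
qed

section \<open>Symmetry of partial derivatives\<close>

lemma second_difference_mean_value:
  fixes g :: "real^'n::finite \<Rightarrow> real"
  assumes g: "Cr_on 2 g U"
    and square: "\<And>\<sigma> \<tau>. \<bar>\<sigma>\<bar> \<le> \<bar>s\<bar> \<Longrightarrow> \<bar>\<tau>\<bar> \<le> \<bar>s\<bar> \<Longrightarrow> x + \<sigma> *\<^sub>R axis a 1 + \<tau> *\<^sub>R axis b 1 \<in> U"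
  shows "\<exists>\<sigma> \<tau>. \<bar>\<sigma>\<bar> \<le> \<bar>s\<bar> \<and> \<bar>\<tau>\<bar> \<le> \<bar>s\<bar> \<and>
     g (x + s *\<^sub>R axis a 1 + s *\<^sub>R axis b 1) - g (x + s *\<^sub>R axis a 1) - g (x + s *\<^sub>R axis b 1) + g x
       = s * s * pd b (pd a g) (x + \<sigma> *\<^sub>R axis a 1 + \<tau> *\<^sub>R axis b 1)"
proof -
  have g1: "Cr_on 1 g U" and ga: "Cr_on 1 (pd a g) U"
    using Cr_on_pds[OF g, of "[]" 1] Cr_on_pds[OF g, of "[a]" 1] by simp_all
  define u where "u \<sigma> = g (x + s *\<^sub>R axis b 1 + \<sigma> *\<^sub>R axis a 1) - g (x + \<sigma> *\<^sub>R axis a 1)" for \<sigma>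
  have "(u has_field_derivative
          pd a g (x + s *\<^sub>R axis b 1 + \<sigma> *\<^sub>R axis a 1) - pd a g (x + \<sigma> *\<^sub>R axis a 1)) (at \<sigma>)"
    if "\<bar>\<sigma>\<bar> \<le> \<bar>s\<bar>" for \<sigma>
    unfolding u_def
    using square[OF that, of s] square[OF that, of 0]
    by (intro DERIV_diff Cr_on_1_has_field_derivative_pd[OF g1]) (simp_all add: add_ac)
  from mean_value_symmetric[OF this]
  obtain \<sigma> where \<sigma>: "\<bar>\<sigma>\<bar> \<le> \<bar>s\<bar>"
    and u: "u s - u 0 = s * (pd a g (x + s *\<^sub>R axis b 1 + \<sigma> *\<^sub>R axis a 1) - pd a g (x + \<sigma> *\<^sub>R axis a 1))"
    by blast
  define w where "w \<tau> = pd a g (x + \<sigma> *\<^sub>R axis a 1 + \<tau> *\<^sub>R axis b 1)" for \<tau>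
  have "(w has_field_derivative pd b (pd a g) (x + \<sigma> *\<^sub>R axis a 1 + \<tau> *\<^sub>R axis b 1)) (at \<tau>)"
    if "\<bar>\<tau>\<bar> \<le> \<bar>s\<bar>" for \<tau>
    unfolding w_def using square[OF \<sigma> that] by (rule Cr_on_1_has_field_derivative_pd[OF ga])
  from mean_value_symmetric[OF this]
  obtain \<tau> where \<tau>: "\<bar>\<tau>\<bar> \<le> \<bar>s\<bar>"
    and w: "w s - w 0 = s * pd b (pd a g) (x + \<sigma> *\<^sub>R axis a 1 + \<tau> *\<^sub>R axis b 1)"
    by blast
  have "g (x + s *\<^sub>R axis a 1 + s *\<^sub>R axis b 1) - g (x + s *\<^sub>R axis a 1) - g (x + s *\<^sub>R axis b 1) + g x
      = u s - u 0" by (simp add: u_def add_ac)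
  also have "\<dots> = s * (w s - w 0)" using u by (simp add: w_def add_ac)
  also have "\<dots> = s * s * pd b (pd a g) (x + \<sigma> *\<^sub>R axis a 1 + \<tau> *\<^sub>R axis b 1)"
    using w by simp
  finally show ?thesis using \<sigma> \<tau> by blast
qed

text \<open>Both mixed partials are values, near \<open>x\<close>, of the same second difference quotient of \<open>g\<close>.\<close>

lemma mixed_partials_agree_nearby:
  fixes g :: "real^'n::finite \<Rightarrow> real"
  assumes g: "Cr_on 2 g U" and "d > 0" and ball: "ball x d \<subseteq> U"
  shows "\<exists>z1 z2. dist z1 x < d \<and> dist z2 x < d \<and> pd b (pd a g) z1 = pd a (pd b g) z2"
proof -
  define s where "s = d / 3"
  have "s \<noteq> 0" using \<open>d > 0\<close> by (simp add: s_def)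
  have near: "dist (x + \<sigma> *\<^sub>R axis i 1 + \<tau> *\<^sub>R axis j 1) x < d"
    if "\<bar>\<sigma>\<bar> \<le> \<bar>s\<bar>" "\<bar>\<tau>\<bar> \<le> \<bar>s\<bar>" for \<sigma> \<tau> i j
  proof -
    have "norm (\<sigma> *\<^sub>R axis i (1::real) + \<tau> *\<^sub>R axis j 1) \<le> \<bar>\<sigma>\<bar> + \<bar>\<tau>\<bar>"
      using norm_triangle_ineq[of "\<sigma> *\<^sub>R axis i (1::real)" "\<tau> *\<^sub>R axis j 1"] by simp
    then show ?thesis using that \<open>d > 0\<close> by (simp add: dist_norm s_def add.assoc)
  qed
  have square: "x + \<sigma> *\<^sub>R axis i 1 + \<tau> *\<^sub>R axis j 1 \<in> U"
    if "\<bar>\<sigma>\<bar> \<le> \<bar>s\<bar>" "\<bar>\<tau>\<bar> \<le> \<bar>s\<bar>" for \<sigma> \<tau> i j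
    using ball near[OF that] by (auto simp: dist_commute)
  obtain \<sigma>1 \<tau>1 where "\<bar>\<sigma>1\<bar> \<le> \<bar>s\<bar>" "\<bar>\<tau>1\<bar> \<le> \<bar>s\<bar>" and ab:
    "g (x + s *\<^sub>R axis a 1 + s *\<^sub>R axis b 1) - g (x + s *\<^sub>R axis a 1) - g (x + s *\<^sub>R axis b 1) + g x
       = s * s * pd b (pd a g) (x + \<sigma>1 *\<^sub>R axis a 1 + \<tau>1 *\<^sub>R axis b 1)"
    using second_difference_mean_value[OF g square] by blast
  obtain \<sigma>2 \<tau>2 where "\<bar>\<sigma>2\<bar> \<le> \<bar>s\<bar>" "\<bar>\<tau>2\<bar> \<le> \<bar>s\<bar>" and ba:
    "g (x + s *\<^sub>R axis b 1 + s *\<^sub>R axis a 1) - g (x + s *\<^sub>R axis b 1) - g (x + s *\<^sub>R axis a 1) + g x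
       = s * s * pd a (pd b g) (x + \<sigma>2 *\<^sub>R axis b 1 + \<tau>2 *\<^sub>R axis a 1)"
    using second_difference_mean_value[OF g square] by blast
  have "g (x + s *\<^sub>R axis b 1 + s *\<^sub>R axis a 1) = g (x + s *\<^sub>R axis a 1 + s *\<^sub>R axis b 1)"
    by (simp add: add_ac)
  then have "s * s * pd b (pd a g) (x + \<sigma>1 *\<^sub>R axis a 1 + \<tau>1 *\<^sub>R axis b 1)
      = s * s * pd a (pd b g) (x + \<sigma>2 *\<^sub>R axis b 1 + \<tau>2 *\<^sub>R axis a 1)"
    using ab ba by linarith
  then have "pd b (pd a g) (x + \<sigma>1 *\<^sub>R axis a 1 + \<tau>1 *\<^sub>R axis b 1)
      = pd a (pd b g) (x + \<sigma>2 *\<^sub>R axis b 1 + \<tau>2 *\<^sub>R axis a 1)"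
    using \<open>s \<noteq> 0\<close> by simp
  moreover have "dist (x + \<sigma>1 *\<^sub>R axis a 1 + \<tau>1 *\<^sub>R axis b 1) x < d"
    and "dist (x + \<sigma>2 *\<^sub>R axis b 1 + \<tau>2 *\<^sub>R axis a 1) x < d"
    using near \<open>\<bar>\<sigma>1\<bar> \<le> \<bar>s\<bar>\<close> \<open>\<bar>\<tau>1\<bar> \<le> \<bar>s\<bar>\<close> \<open>\<bar>\<sigma>2\<bar> \<le> \<bar>s\<bar>\<close> \<open>\<bar>\<tau>2\<bar> \<le> \<bar>s\<bar>\<close> by blast+
  ultimately show ?thesis by blast
qed

lemma pd_commute:
  fixes g :: "real^'n::finite \<Rightarrow> real"
  assumes g: "Cr_on 2 g U" and x: "x \<in> U"
  shows "pd b (pd a g) x = pd a (pd b g) x"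
proof (rule ccontr)
  assume "pd b (pd a g) x \<noteq> pd a (pd b g) x"
  define e where "e = \<bar>pd b (pd a g) x - pd a (pd b g) x\<bar> / 2"
  have "e > 0" using \<open>pd b (pd a g) x \<noteq> pd a (pd b g) x\<close> by (simp add: e_def)
  have "continuous_on U (pds ks g)" if "ks \<in> {[b, a], [a, b]}" for ks
    using that by (auto intro: Cr_on_continuous_on_pds[OF g])
  then have "\<forall>\<^sub>F z in nhds x. z \<in> U \<and> (\<forall>ks\<in>{[b, a], [a, b]}. dist (pds ks g z) (pds ks g x) < e)"
    using Cr_on_open[OF g] x \<open>e > 0\<close> by (intro eventually_nhds_continuous_family) auto
  then obtain d where "d > 0" and d: "\<And>z. dist z x < d \<Longrightarrow> z \<in> U
      \<and> \<bar>pd b (pd a g) z - pd b (pd a g) x\<bar> < e \<and> \<bar>pd a (pd b g) z - pd a (pd b g) x\<bar> < e"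
    unfolding eventually_nhds_metric by (auto simp: dist_real_def)
  then have "ball x d \<subseteq> U" by (auto simp: dist_commute)
  then obtain z1 z2 where "dist z1 x < d" "dist z2 x < d" and eq: "pd b (pd a g) z1 = pd a (pd b g) z2"
    using mixed_partials_agree_nearby[OF g \<open>d > 0\<close>] by blast
  then have "\<bar>pd b (pd a g) z1 - pd b (pd a g) x\<bar> < e" and "\<bar>pd a (pd b g) z2 - pd a (pd b g) x\<bar> < e"
    using d by blast+
  with eq show False unfolding e_def by (simp add: abs_less_iff abs_if split: if_splits)
qed

lemma pd_eq_on_open:
  assumes "open U" "x \<in> U" and "\<And>z. z \<in> U \<Longrightarrow> g1 z = g2 z"
  shows "pd i g1 x = pd i g2 x"
proof -
  obtain e where "e > 0" and "ball x e \<subseteq> U"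
    using assms openE by blast
  then have "\<forall>\<^sub>F s in nhds 0. g1 (x + s *\<^sub>R axis i 1) = g2 (x + s *\<^sub>R axis i 1)"
    unfolding eventually_nhds_metric by (intro exI[of _ e]) (auto intro!: assms(3) simp: dist_norm)
  then show ?thesis unfolding pd_def by (rule deriv_cong_ev) simp
qed

lemma pds_eq_on_open:
  assumes "open U" "x \<in> U" and "\<And>z. z \<in> U \<Longrightarrow> g1 z = g2 z"
  shows "pds ks g1 x = pds ks g2 x"
  using assms(2) by (induction ks arbitrary: x) (auto intro: assms(3) pd_eq_on_open[OF assms(1)])

lemma Cr_on_symmetric_partials:
  fixes f :: "real^'n::finite \<Rightarrow> real"
  assumes f: "Cr_on r f U" and x: "x \<in> U"
  shows "symmetric_upto r (\<lambda>ks. pds ks f x)"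
  unfolding symmetric_upto_def
proof (intro allI impI)
  fix p s :: "'n list" and a b :: 'n
  assume "length p + length s + 2 \<le> r"
  then have "Cr_on 2 (pds s f) U" by (intro Cr_on_pds[OF f]) simp
  then have "pds p (pd b (pd a (pds s f))) x = pds p (pd a (pd b (pds s f))) x"
    using Cr_on_open[OF f] x by (intro pds_eq_on_open pd_commute) auto
  then show "pds (p @ a # b # s) f x = pds (p @ b # a # s) f x"
    by (simp add: pds_append)
qed

section \<open>Taylor expansion\<close>

definition dirderiv :: "nat \<Rightarrow> (real^'n::finite \<Rightarrow> real) \<Rightarrow> real^'n \<Rightarrow> real^'n \<Rightarrow> real" where
  "dirderiv j g y v = tensor_form (\<lambda>ks. pds ks g y) j v"

lemma taylor_eq_sum_dirderiv: "taylor k g y x = (\<Sum>j\<le>k. dirderiv j g y (x - y) / fact j)"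
  by (simp add: taylor_def dirderiv_def tensor_form_def sum_divide_distrib sum_distrib_left)

lemma dirderiv_has_derivative_along_line:
  fixes g :: "real^'n::finite \<Rightarrow> real"
  assumes g: "Cr_on k g U" and "j < k" and y: "y + t *\<^sub>R v \<in> U"
  shows "((\<lambda>t. dirderiv j g (y + t *\<^sub>R v) v) has_field_derivative dirderiv (Suc j) g (y + t *\<^sub>R v) v) (at t)"
proof -
  have "((\<lambda>t. \<Sum>ks\<in>{ks :: 'n list. length ks = j}. pds ks g (y + t *\<^sub>R v) * (\<Prod>l<j. v $ (ks ! l)))
      has_field_derivative
      (\<Sum>ks\<in>{ks. length ks = j}. (\<Sum>i\<in>UNIV. v $ i * pd i (pds ks g) (y + t *\<^sub>R v)) * (\<Prod>l<j. v $ (ks ! l)))) (at t)"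
  proof (rule DERIV_sum)
    fix ks :: "'n list" assume "ks \<in> {ks. length ks = j}"
    then have "Cr_on 1 (pds ks g) U"
      using \<open>j < k\<close> by (intro Cr_on_pds[OF g]) simp
    from Cr_on_1_has_field_derivative_along_line[OF this y]
    show "((\<lambda>t. pds ks g (y + t *\<^sub>R v) * (\<Prod>l<j. v $ (ks ! l))) has_field_derivative
      (\<Sum>i\<in>UNIV. v $ i * pd i (pds ks g) (y + t *\<^sub>R v)) * (\<Prod>l<j. v $ (ks ! l))) (at t)"
      by (rule DERIV_cong[OF DERIV_mult[OF _ DERIV_const]]) simp_all
  qed
  moreover have "(\<Sum>ks\<in>{ks. length ks = j}. (\<Sum>i\<in>UNIV. v $ i * pd i (pds ks g) (y + t *\<^sub>R v)) * (\<Prod>l<j. v $ (ks ! l)))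
      = dirderiv (Suc j) g (y + t *\<^sub>R v) v"
    unfolding dirderiv_def tensor_form_Suc unfolding tensor_form_def
    by (simp add: sum_distrib_left sum_distrib_right mult_ac sum.swap[of _ UNIV])
  ultimately show ?thesis unfolding dirderiv_def tensor_form_def by simp
qed

lemma taylor_lagrange_segment:
  fixes g :: "real^'n::finite \<Rightarrow> real"
  assumes g: "Cr_on k g U" and "0 < k" and segment: "\<And>t. 0 \<le> t \<Longrightarrow> t \<le> 1 \<Longrightarrow> y + t *\<^sub>R v \<in> U"
  shows "\<exists>s. 0 < s \<and> s < 1 \<and>
           g (y + v) = (\<Sum>j<k. dirderiv j g y v / fact j) + dirderiv k g (y + s *\<^sub>R v) v / fact k"
proof -
  define D where "D j t = dirderiv j g (y + t *\<^sub>R v) v" for j t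
  have "D 0 = (\<lambda>t. g (y + t *\<^sub>R v))"
    by (simp add: fun_eq_iff D_def dirderiv_def)
  moreover have "\<forall>j t. j < k \<and> 0 \<le> t \<and> t \<le> 1 \<longrightarrow> (D j has_field_derivative D (Suc j) t) (at t)"
    unfolding D_def using dirderiv_has_derivative_along_line[OF g] segment by blast
  ultimately obtain s where "0 < s" "s < 1"
    "g (y + 1 *\<^sub>R v) = (\<Sum>j<k. D j 0 / fact j * (1 - 0) ^ j) + D k s / fact k * (1 - 0) ^ k"
    using Taylor_up[OF \<open>0 < k\<close>, of D "\<lambda>t. g (y + t *\<^sub>R v)" 0 1 0] by auto
  then show ?thesis unfolding D_def by (intro exI[of _ s]) simp
qed

lemma taylor_peano:
  fixes g :: "real^'n::finite \<Rightarrow> real"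
  assumes g: "Cr_on k g U" and y: "y \<in> U" and "0 < k" and "e > 0"
  shows "\<forall>\<^sub>F x in nhds y. \<bar>g x - taylor k g y x\<bar> \<le> e * norm (x - y) ^ k"
proof -
  define N where "N = real (card {ks :: 'n list. length ks = k})"
  define e' where "e' = e / (N + 1)"
  have "e' > 0" and "N * e' \<le> e"
    using \<open>e > 0\<close> by (auto simp: e'_def N_def field_simps)
  have "\<forall>\<^sub>F z in nhds y. z \<in> U \<and> (\<forall>ks\<in>{ks. length ks = k}. dist (pds ks g z) (pds ks g y) < e')"
    using Cr_on_open[OF g] y finite_lists_of_length Cr_on_continuous_on_pds[OF g] \<open>e' > 0\<close>
    by (intro eventually_nhds_continuous_family) auto
  then obtain d where "d > 0" and d: "\<And>z. dist z y < d \<Longrightarrow>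
      z \<in> U \<and> (\<forall>ks. length ks = k \<longrightarrow> \<bar>pds ks g z - pds ks g y\<bar> < e')"
    unfolding eventually_nhds_metric by (auto simp: dist_real_def)
  show ?thesis
    using eventually_nhds_ball[OF \<open>d > 0\<close>]
  proof eventually_elim
    fix x assume "x \<in> ball y d"
    define v where "v = x - y"
    have near: "dist (y + t *\<^sub>R v) y < d" if "0 \<le> t" "t \<le> 1" for t
      using \<open>x \<in> ball y d\<close> that mult_left_le_one_le[of "norm v" t]
      by (simp add: v_def dist_norm norm_minus_commute)
    obtain s where "0 < s" "s < 1" and lagrange:
        "g (y + v) = (\<Sum>j<k. dirderiv j g y v / fact j) + dirderiv k g (y + s *\<^sub>R v) v / fact k"
      using taylor_lagrange_segment[OF g \<open>0 < k\<close>] near d by blast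
    have "g x - taylor k g y x = (dirderiv k g (y + s *\<^sub>R v) v - dirderiv k g y v) / fact k"
      using lagrange by (simp add: v_def taylor_eq_sum_dirderiv lessThan_Suc_atMost[symmetric] diff_divide_distrib)
    then have "\<bar>g x - taylor k g y x\<bar> = \<bar>dirderiv k g (y + s *\<^sub>R v) v - dirderiv k g y v\<bar> / fact k"
      by simp
    also have "\<dots> \<le> \<bar>dirderiv k g (y + s *\<^sub>R v) v - dirderiv k g y v\<bar>"
      using fact_ge_1[of k] by (simp add: divide_le_eq mult_le_cancel_left1)
    also have "\<dots> \<le> N * e' * norm v ^ k"
      unfolding dirderiv_def N_def
      by (rule tensor_form_diff_le) (use d[OF near] \<open>0 < s\<close> \<open>s < 1\<close> in \<open>auto intro: less_imp_le\<close>)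
    also have "\<dots> \<le> e * norm (x - y) ^ k"
      using \<open>N * e' \<le> e\<close> unfolding v_def by (intro mult_right_mono) auto
    finally show "\<bar>g x - taylor k g y x\<bar> \<le> e * norm (x - y) ^ k" .
  qed
qed

definition gradient_form :: "('n::finite list \<Rightarrow> real) \<Rightarrow> nat \<Rightarrow> real^'n \<Rightarrow> real^'n" where
  "gradient_form c m v = (\<chi> i. tensor_form (\<lambda>ks. c (ks @ [i])) m v / fact m)"

lemma gradient_form_scaleR: "gradient_form c m (t *\<^sub>R v) = t ^ m *\<^sub>R gradient_form c m v"
  by (simp add: gradient_form_def vec_eq_iff tensor_form_scaleR)

lemma continuous_on_gradient_form: "continuous_on S (gradient_form c m)"
  unfolding gradient_form_def by (intro continuous_intros) simp

lemma dirderiv_has_derivative_gradient_form: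
  fixes f :: "real^'n::finite \<Rightarrow> real"
  assumes "symmetric_upto (Suc m) (\<lambda>ks. pds ks f y)"
  shows "((\<lambda>s. dirderiv (Suc m) f y (v + s *\<^sub>R axis i 1) / fact (Suc m))
           has_field_derivative gradient_form (\<lambda>ks. pds ks f y) m v $ i) (at 0)"
  using DERIV_cdivide[OF tensor_form_has_derivative_axis[OF assms, of v i], of "fact (Suc m)"]
  by (simp add: dirderiv_def gradient_form_def fact_Suc del: of_nat_Suc)

lemma taylor_Suc_eq_leading_form:
  assumes "\<forall>x. taylor m f y x = f y"
  shows "taylor (Suc m) f y x = f y + dirderiv (Suc m) f y (x - y) / fact (Suc m)"
  using assms taylor_eq_sum_dirderiv[of "Suc m" f y x] taylor_eq_sum_dirderiv[of m f y x] by simp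

lemma dirderiv_eq_0_below:
  assumes low: "\<forall>x. taylor m f y x = f y" and "1 \<le> j" "j \<le> m"
  shows "dirderiv j f y v = 0"
proof -
  define a where "a j = (if j = 0 then 0 else dirderiv j f y v / fact j)" for j
  have "(\<Sum>j\<le>m. a j * t ^ j) = 0" for t :: real
  proof -
    have "f y = (\<Sum>j\<le>m. dirderiv j f y (t *\<^sub>R v) / fact j)"
      using low[rule_format, of "y + t *\<^sub>R v"] by (simp add: taylor_eq_sum_dirderiv)
    also have "\<dots> = (\<Sum>j\<le>m. a j * t ^ j + (if j = 0 then f y else 0))"
      by (rule sum.cong) (auto simp: a_def dirderiv_def tensor_form_scaleR)
    finally show ?thesis by (simp add: sum.distrib)
  qed
  then have "\<forall>i\<le>m. a i = 0" using polyfun_eq_0[of a m] by blast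
  then show ?thesis using assms by (auto simp: a_def)
qed

lemma dirderiv_pd_eq_0_below:
  assumes low: "\<forall>x. taylor m f y x = f y" and sym: "symmetric_upto m (\<lambda>ks. pds ks f y)" and "j < m"
  shows "dirderiv j (pd i f) y v = 0"
proof -
  have "((\<lambda>s. dirderiv (Suc j) f y (v + s *\<^sub>R axis i 1)) has_field_derivative
          real (Suc j) * dirderiv j (pd i f) y v) (at 0)"
    using tensor_form_has_derivative_axis[OF symmetric_upto_mono[OF sym], of j v i] \<open>j < m\<close>
    by (simp add: dirderiv_def pds_append)
  moreover have "(\<lambda>s. dirderiv (Suc j) f y (v + s *\<^sub>R axis i 1)) = (\<lambda>s. 0)"
    using dirderiv_eq_0_below[OF low] \<open>j < m\<close> by auto
  ultimately have "real (Suc j) * dirderiv j (pd i f) y v = 0"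
    using DERIV_unique DERIV_const by metis
  then show ?thesis by simp
qed

lemma taylor_pd_eq_gradient_form:
  assumes "\<forall>x. taylor m f y x = f y" and "symmetric_upto m (\<lambda>ks. pds ks f y)"
  shows "taylor m (pd i f) y x = gradient_form (\<lambda>ks. pds ks f y) m (x - y) $ i"
proof -
  have "(\<Sum>j<m. dirderiv j (pd i f) y (x - y) / fact j) = 0"
    by (intro sum.neutral) (simp add: dirderiv_pd_eq_0_below[OF assms])
  then have "taylor m (pd i f) y x = dirderiv m (pd i f) y (x - y) / fact m"
    by (simp add: taylor_eq_sum_dirderiv lessThan_Suc_atMost[symmetric])
  then show ?thesis by (simp add: gradient_form_def dirderiv_def pds_append)
qed

lemma grad_taylor_eq_gradient_form:
  assumes low: "\<forall>x. taylor m f y x = f y" and sym: "symmetric_upto (Suc m) (\<lambda>ks. pds ks f y)"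
  shows "grad (taylor (Suc m) f y) x = gradient_form (\<lambda>ks. pds ks f y) m (x - y)"
proof -
  have "pd i (taylor (Suc m) f y) x = gradient_form (\<lambda>ks. pds ks f y) m (x - y) $ i" for i
  proof -
    have "(\<lambda>s. taylor (Suc m) f y (x + s *\<^sub>R axis i 1))
        = (\<lambda>s. f y + dirderiv (Suc m) f y ((x - y) + s *\<^sub>R axis i 1) / fact (Suc m))"
      by (simp add: fun_eq_iff taylor_Suc_eq_leading_form[OF low] algebra_simps)
    moreover have "((\<lambda>s. f y + dirderiv (Suc m) f y ((x - y) + s *\<^sub>R axis i 1) / fact (Suc m))
        has_field_derivative gradient_form (\<lambda>ks. pds ks f y) m (x - y) $ i) (at 0)"
      using DERIV_add[OF DERIV_const dirderiv_has_derivative_gradient_form[OF sym]] by simp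
    ultimately show ?thesis unfolding pd_def by (simp add: DERIV_imp_deriv)
  qed
  then show ?thesis by (simp add: grad_def vec_eq_iff)
qed

lemma grad_peano_gradient_form:
  fixes f :: "real^'n::finite \<Rightarrow> real"
  assumes f: "Cr_on (Suc m) f U" and y: "y \<in> U" and low: "\<forall>x. taylor m f y x = f y"
    and "1 \<le> m" and "e > 0"
  shows "\<forall>\<^sub>F x in nhds y. norm (grad f x - gradient_form (\<lambda>ks. pds ks f y) m (x - y)) \<le> e * norm (x - y) ^ m"
proof -
  define e' where "e' = e / real CARD('n)"
  have sym: "symmetric_upto m (\<lambda>ks. pds ks f y)"
    using symmetric_upto_mono[OF Cr_on_symmetric_partials[OF f y]] by simp
  have "Cr_on m (pd i f) U" for i
    using Cr_on_pds[OF f, of "[i]" m] by simp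
  then have "\<forall>\<^sub>F x in nhds y. \<forall>i. \<bar>pd i f x - taylor m (pd i f) y x\<bar> \<le> e' * norm (x - y) ^ m"
    using y \<open>1 \<le> m\<close> \<open>e > 0\<close> by (intro eventually_all_finite taylor_peano) (auto simp: e'_def)
  then show ?thesis
  proof eventually_elim
    case (elim x)
    have "norm (grad f x - gradient_form (\<lambda>ks. pds ks f y) m (x - y))
        \<le> (\<Sum>i\<in>UNIV. \<bar>(grad f x - gradient_form (\<lambda>ks. pds ks f y) m (x - y)) $ i\<bar>)"
      by (rule norm_le_l1_cart)
    also have "\<dots> \<le> real CARD('n) * (e' * norm (x - y) ^ m)"
      using elim by (intro sum_bounded_above)
        (simp add: grad_def taylor_pd_eq_gradient_form[OF low sym])
    finally show ?case by (simp add: e'_def)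
  qed
qed

section \<open>Homogeneous leading terms and local minima\<close>

lemma eventually_nhds_cball: "(\<forall>\<^sub>F x in nhds y. P x) \<longleftrightarrow> (\<exists>\<delta>>0. \<forall>x\<in>cball y \<delta>. P x)"
  unfolding eventually_nhds_metric_le Ball_def mem_cball by (simp add: dist_commute)

lemma local_min_at_iff_eventually: "local_min_at g y \<longleftrightarrow> (\<forall>\<^sub>F x in nhds y. g y \<le> g x)"
  by (simp add: local_min_at_def eventually_nhds_cball)

lemma homogeneous_lower_bound:
  fixes F :: "'a::euclidean_space \<Rightarrow> real"
  assumes cont: "continuous_on (sphere 0 1) F" and pos: "\<And>u. norm u = 1 \<Longrightarrow> 0 < F u"
    and hom: "\<And>t v. 0 \<le> t \<Longrightarrow> F (t *\<^sub>R v) = t ^ k * F v" and "1 \<le> k"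
  shows "\<exists>c>0. \<forall>v. c * norm v ^ k \<le> F v"
proof -
  obtain b :: 'a where "b \<in> Basis" by (meson ex_in_conv nonempty_Basis)
  then have "sphere (0 :: 'a) 1 \<noteq> {}" by (auto simp: norm_Basis)
  from continuous_attains_inf[OF compact_sphere this cont]
  obtain u0 where "norm u0 = 1" and min: "\<And>u. norm u = 1 \<Longrightarrow> F u0 \<le> F u"
    by auto
  have "F u0 * norm v ^ k \<le> F v" for v
  proof (cases "v = 0")
    case True
    then show ?thesis using hom[of 0 0] \<open>1 \<le> k\<close> by (simp add: power_0_left)
  next
    case False
    then have "F v = norm v ^ k * F (v /\<^sub>R norm v)"
      using hom[of "norm v" "v /\<^sub>R norm v"] by simp
    moreover have "F u0 \<le> F (v /\<^sub>R norm v)"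
      using False by (intro min) simp
    ultimately show ?thesis
      using mult_right_mono[of "F u0" "F (v /\<^sub>R norm v)" "norm v ^ k"] by (simp add: mult.commute)
  qed
  then show ?thesis using pos[OF \<open>norm u0 = 1\<close>] by blast
qed

lemma local_min_at_homogeneous_iff:
  fixes H :: "real^'n::finite \<Rightarrow> real"
  assumes hom: "\<And>t v. 0 \<le> t \<Longrightarrow> H (t *\<^sub>R v) = t ^ k * H v" and "1 \<le> k"
  shows "local_min_at (\<lambda>x. a + H (x - y)) y \<longleftrightarrow> (\<forall>v. 0 \<le> H v)"
proof -
  have H0: "H 0 = 0" using hom[of 0 0] \<open>1 \<le> k\<close> by (simp add: power_0_left)
  show ?thesis
  proof
    assume "local_min_at (\<lambda>x. a + H (x - y)) y"
    then obtain \<delta> where "\<delta> > 0" and \<delta>: "\<And>x. x \<in> cball y \<delta> \<Longrightarrow> 0 \<le> H (x - y)"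
      unfolding local_min_at_def using H0 by auto
    show "\<forall>v. 0 \<le> H v"
    proof
      fix v :: "real^'n"
      show "0 \<le> H v"
      proof (cases "v = 0")
        case False
        define t where "t = \<delta> / norm v"
        have "t > 0" using \<open>\<delta> > 0\<close> False by (simp add: t_def)
        have "0 \<le> H (t *\<^sub>R v)"
          using \<delta>[of "y + t *\<^sub>R v"] \<open>\<delta> > 0\<close> False by (simp add: dist_norm t_def)
        with \<open>t > 0\<close> show ?thesis
          using zero_less_power[OF \<open>t > 0\<close>, of k] by (simp add: hom zero_le_mult_iff)
      qed (simp add: H0)
    qed
  next
    assume "\<forall>v. 0 \<le> H v"
    then show "local_min_at (\<lambda>x. a + H (x - y)) y"
      unfolding local_min_at_def using H0 by (intro exI[of _ 1]) auto
  qed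
qed

lemma local_min_imp_leading_term_nonneg:
  fixes f H :: "real^'n::finite \<Rightarrow> real"
  assumes approx: "\<And>e. e > 0 \<Longrightarrow> \<forall>\<^sub>F x in nhds y. \<bar>f x - f y - H (x - y)\<bar> \<le> e * norm (x - y) ^ k"
    and hom: "\<And>t v. 0 \<le> t \<Longrightarrow> H (t *\<^sub>R v) = t ^ k * H v" and "1 \<le> k"
    and min: "local_min_at f y"
  shows "0 \<le> H v"
proof (rule ccontr)
  assume "\<not> 0 \<le> H v"
  then have "H v < 0" by simp
  moreover have "H 0 = 0" using hom[of 0 0] \<open>1 \<le> k\<close> by (simp add: power_0_left)
  ultimately have "v \<noteq> 0" by auto
  define e where "e = - H v / (2 * norm v ^ k)"
  have "e > 0" using \<open>H v < 0\<close> \<open>v \<noteq> 0\<close> by (simp add: e_def divide_neg_pos)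
  have "\<forall>\<^sub>F x in nhds y. f y \<le> f x \<and> \<bar>f x - f y - H (x - y)\<bar> \<le> e * norm (x - y) ^ k"
    using min approx[OF \<open>e > 0\<close>] unfolding local_min_at_iff_eventually by (rule eventually_conj)
  then obtain \<delta> where "\<delta> > 0" and \<delta>: "\<And>x. x \<in> cball y \<delta> \<Longrightarrow>
      f y \<le> f x \<and> \<bar>f x - f y - H (x - y)\<bar> \<le> e * norm (x - y) ^ k"
    unfolding eventually_nhds_cball by blast
  define t where "t = \<delta> / norm v"
  have "t > 0" using \<open>\<delta> > 0\<close> \<open>v \<noteq> 0\<close> by (simp add: t_def)
  have "f y \<le> f (y + t *\<^sub>R v)" and "f (y + t *\<^sub>R v) - f y - t ^ k * H v \<le> e * \<delta> ^ k"
    using \<delta>[of "y + t *\<^sub>R v"] \<open>t > 0\<close> \<open>\<delta> > 0\<close> \<open>v \<noteq> 0\<close> by (auto simp: dist_norm t_def hom dest: abs_le_D1)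
  moreover have "e * \<delta> ^ k = - (t ^ k * H v) / 2"
    using \<open>v \<noteq> 0\<close> by (simp add: e_def t_def power_divide mult_ac)
  moreover have "t ^ k * H v < 0" using \<open>t > 0\<close> \<open>H v < 0\<close> by (simp add: mult_pos_neg)
  ultimately show False by linarith
qed

lemma local_min_stable_under_perturbation:
  fixes f H :: "real^'n::finite \<Rightarrow> real"
  assumes approx: "\<And>e. e > 0 \<Longrightarrow> \<forall>\<^sub>F x in nhds y. \<bar>f x - f y - H (x - y)\<bar> \<le> e * norm (x - y) ^ k"
    and "c > 0" and coercive: "\<And>v. c * norm v ^ k \<le> H v"
  shows "\<exists>\<epsilon>>0. \<forall>h. (\<exists>\<rho>>0. \<forall>x\<in>cball y \<rho>. \<bar>h x - h y\<bar> \<le> \<epsilon> * norm (x - y) ^ k)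
           \<longrightarrow> local_min_at (\<lambda>x. f x + h x) y"
proof (intro exI[of _ "c / 2"] conjI allI impI)
  show "c / 2 > 0" using \<open>c > 0\<close> by simp
  fix h :: "real^'n \<Rightarrow> real"
  assume "\<exists>\<rho>>0. \<forall>x\<in>cball y \<rho>. \<bar>h x - h y\<bar> \<le> c / 2 * norm (x - y) ^ k"
  then have "\<forall>\<^sub>F x in nhds y. \<bar>h x - h y\<bar> \<le> c / 2 * norm (x - y) ^ k"
    unfolding eventually_nhds_cball .
  moreover have "\<forall>\<^sub>F x in nhds y. \<bar>f x - f y - H (x - y)\<bar> \<le> c / 2 * norm (x - y) ^ k"
    using \<open>c > 0\<close> by (intro approx) simp
  ultimately have "\<forall>\<^sub>F x in nhds y. f y + h y \<le> f x + h x"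
  proof eventually_elim
    case (elim x)
    then show ?case using coercive[of "x - y"] by linarith
  qed
  then show "local_min_at (\<lambda>x. f x + h x) y"
    unfolding local_min_at_iff_eventually .
qed

text \<open>A nonnegative function is minimal, hence critical, wherever it vanishes.\<close>

lemma nonneg_pos_at_noncritical:
  fixes H :: "real^'n::finite \<Rightarrow> real"
  assumes "\<And>v. 0 \<le> H v"
    and deriv: "\<And>i. ((\<lambda>s. H (v + s *\<^sub>R axis i 1)) has_field_derivative G $ i) (at 0)"
    and "G \<noteq> 0"
  shows "0 < H v"
proof (rule ccontr)
  assume "\<not> 0 < H v"
  then have "H v = 0" using assms(1)[of v] by simp
  then have "G $ i = 0" for i
    using assms(1) by (intro DERIV_local_min[OF deriv zero_less_one]) simp
  with \<open>G \<noteq> 0\<close> show False by (simp add: vec_eq_iff)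
qed

lemma approx_homogeneous_norm_lower_bound:
  fixes F G :: "'a::euclidean_space \<Rightarrow> 'b::real_normed_vector"
  assumes approx: "\<And>e. e > 0 \<Longrightarrow> \<forall>\<^sub>F x in nhds y. norm (F x - G (x - y)) \<le> e * norm (x - y) ^ k"
    and cont: "continuous_on UNIV G" and hom: "\<And>t v. 0 \<le> t \<Longrightarrow> G (t *\<^sub>R v) = t ^ k *\<^sub>R G v"
    and nondeg: "\<And>v. G v = 0 \<Longrightarrow> v = 0" and "1 \<le> k"
  shows "\<exists>c>0. \<exists>\<delta>>0. \<forall>x\<in>cball y \<delta>. c * norm (x - y) ^ k \<le> norm (F x)"
proof -
  have "continuous_on (sphere 0 1) (\<lambda>v. norm (G v))"
    using cont by (intro continuous_on_norm) (rule continuous_on_subset, auto)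
  moreover have "0 < norm (G u)" if "norm u = 1" for u
    using that nondeg[of u] by auto
  ultimately obtain c where "c > 0" and c: "\<And>v. c * norm v ^ k \<le> norm (G v)"
    using homogeneous_lower_bound[of "\<lambda>v. norm (G v)" k] hom \<open>1 \<le> k\<close> by force
  have "\<forall>\<^sub>F x in nhds y. norm (F x - G (x - y)) \<le> c / 2 * norm (x - y) ^ k"
    using \<open>c > 0\<close> by (intro approx) simp
  then have "\<forall>\<^sub>F x in nhds y. c / 2 * norm (x - y) ^ k \<le> norm (F x)"
  proof eventually_elim
    case (elim x)
    then show ?case
      using c[of "x - y"] norm_triangle_ineq2[of "G (x - y)" "F x"] by (simp add: norm_minus_commute)
  qed
  then show ?thesis
    using \<open>c > 0\<close> unfolding eventually_nhds_cball by (intro exI[of _ "c / 2"]) auto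
qed

lemma degenerate_local_min_criterion:
  fixes f H :: "real^'n::finite \<Rightarrow> real" and G :: "real^'n \<Rightarrow> real^'n"
  assumes approx: "\<And>e. e > 0 \<Longrightarrow> \<forall>\<^sub>F x in nhds y. \<bar>f x - f y - H (x - y)\<bar> \<le> e * norm (x - y) ^ k"
    and hom: "\<And>t v. 0 \<le> t \<Longrightarrow> H (t *\<^sub>R v) = t ^ k * H v" and "1 \<le> k"
    and cont: "continuous_on UNIV H"
    and deriv: "\<And>v i. ((\<lambda>s. H (v + s *\<^sub>R axis i 1)) has_field_derivative G v $ i) (at 0)"
    and nondeg: "\<And>v. G v = 0 \<Longrightarrow> v = 0"
  shows "(local_min_at f y \<longleftrightarrow> local_min_at (\<lambda>x. f y + H (x - y)) y)
    \<and> (local_min_at f y \<longrightarrow> (\<exists>\<epsilon>>0. \<forall>h. (\<exists>\<rho>>0. \<forall>x\<in>cball y \<rho>. \<bar>h x - h y\<bar> \<le> \<epsilon> * norm (x - y) ^ k)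
          \<longrightarrow> local_min_at (\<lambda>x. f x + h x) y))"
proof -
  have stable: "\<exists>\<epsilon>>0. \<forall>h. (\<exists>\<rho>>0. \<forall>x\<in>cball y \<rho>. \<bar>h x - h y\<bar> \<le> \<epsilon> * norm (x - y) ^ k)
          \<longrightarrow> local_min_at (\<lambda>x. f x + h x) y" if nonneg: "\<forall>v. 0 \<le> H v"
  proof -
    have pos: "0 < H u" if "norm u = 1" for u
    proof (rule nonneg_pos_at_noncritical[where G = "G u"])
      show "0 \<le> H v" for v using nonneg by blast
      show "((\<lambda>s. H (u + s *\<^sub>R axis i 1)) has_field_derivative G u $ i) (at 0)" for i
        by (rule deriv)
      show "G u \<noteq> 0" using nondeg[of u] that by auto
    qed
    obtain c where "c > 0" and coercive: "\<And>v. c * norm v ^ k \<le> H v"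
      using homogeneous_lower_bound[OF continuous_on_subset[OF cont subset_UNIV] pos hom \<open>1 \<le> k\<close>]
      by blast
    show ?thesis
      by (rule local_min_stable_under_perturbation[OF approx \<open>c > 0\<close> coercive])
  qed
  have "local_min_at f y" if nonneg: "\<forall>v. 0 \<le> H v"
  proof -
    obtain \<epsilon> where "\<epsilon> > 0" and "\<forall>h. (\<exists>\<rho>>0. \<forall>x\<in>cball y \<rho>. \<bar>h x - h y\<bar> \<le> \<epsilon> * norm (x - y) ^ k)
          \<longrightarrow> local_min_at (\<lambda>x. f x + h x) y"
      using stable[OF nonneg] by blast
    from this(2)[rule_format, of "\<lambda>_. 0"] \<open>\<epsilon> > 0\<close> show ?thesis by auto
  qed
  moreover have "local_min_at f y \<Longrightarrow> 0 \<le> H v" for v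
    by (rule local_min_imp_leading_term_nonneg[OF approx hom \<open>1 \<le> k\<close>])
  ultimately have "local_min_at f y \<longleftrightarrow> (\<forall>v. 0 \<le> H v)"
    by blast
  then show ?thesis
    using stable local_min_at_homogeneous_iff[OF hom \<open>1 \<le> k\<close>, of "f y" y] by simp
qed

lemma grad_lower_bound_at_degenerate_point:
  fixes f :: "real^'n::finite \<Rightarrow> real"
  assumes f: "Cr_on (Suc m) f U" and "y \<in> U" and low: "\<forall>x. taylor m f y x = f y" and "1 \<le> m"
    and nondeg: "\<And>v. gradient_form (\<lambda>ks. pds ks f y) m v = 0 \<Longrightarrow> v = 0"
  shows "\<exists>c>0. \<exists>\<delta>>0. \<forall>x\<in>cball y \<delta>. c * norm (x - y) ^ m \<le> norm (grad f x)"
proof (rule approx_homogeneous_norm_lower_bound)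
  show "\<forall>\<^sub>F x in nhds y. norm (grad f x - gradient_form (\<lambda>ks. pds ks f y) m (x - y)) \<le> e * norm (x - y) ^ m"
    if "e > 0" for e
    by (rule grad_peano_gradient_form[OF f \<open>y \<in> U\<close> low \<open>1 \<le> m\<close> that])
  show "continuous_on UNIV (gradient_form (\<lambda>ks. pds ks f y) m)"
    by (rule continuous_on_gradient_form)
  show "gradient_form (\<lambda>ks. pds ks f y) m (t *\<^sub>R v) = t ^ m *\<^sub>R gradient_form (\<lambda>ks. pds ks f y) m v"
    for t v by (rule gradient_form_scaleR)
qed (use nondeg \<open>1 \<le> m\<close> in blast)+

lemma local_min_criterion_at_degenerate_point:
  fixes f :: "real^'n::finite \<Rightarrow> real"
  assumes f: "Cr_on (Suc m) f U" and "y \<in> U" and low: "\<forall>x. taylor m f y x = f y"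
    and nondeg: "\<And>v. gradient_form (\<lambda>ks. pds ks f y) m v = 0 \<Longrightarrow> v = 0"
  shows "(local_min_at f y \<longleftrightarrow> local_min_at (taylor (Suc m) f y) y)
    \<and> (local_min_at f y \<longrightarrow> (\<exists>\<epsilon>>0. \<forall>h. (\<exists>\<rho>>0. \<forall>x\<in>cball y \<rho>. \<bar>h x - h y\<bar> \<le> \<epsilon> * norm (x - y) ^ Suc m)
          \<longrightarrow> local_min_at (\<lambda>x. f x + h x) y))"
proof -
  define H where "H v = dirderiv (Suc m) f y v / fact (Suc m)" for v
  have taylor_H: "taylor (Suc m) f y = (\<lambda>x. f y + H (x - y))"
    using taylor_Suc_eq_leading_form[OF low] by (simp add: fun_eq_iff H_def)
  show ?thesis
    unfolding taylor_H
  proof (rule degenerate_local_min_criterion)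
    show "\<forall>\<^sub>F x in nhds y. \<bar>f x - f y - H (x - y)\<bar> \<le> e * norm (x - y) ^ Suc m" if "e > 0" for e
      using taylor_peano[OF f \<open>y \<in> U\<close> _ that] by (simp add: taylor_H diff_diff_eq)
    show "H (t *\<^sub>R v) = t ^ Suc m * H v" for t v
      by (simp add: H_def dirderiv_def tensor_form_scaleR)
    show "continuous_on UNIV H"
      unfolding H_def dirderiv_def by (intro continuous_intros) simp
    show "((\<lambda>s. H (v + s *\<^sub>R axis i 1)) has_field_derivative gradient_form (\<lambda>ks. pds ks f y) m v $ i) (at 0)"
      for v i
      unfolding H_def by (rule dirderiv_has_derivative_gradient_form[OF Cr_on_symmetric_partials[OF f \<open>y \<in> U\<close>]])
  qed (use nondeg in auto)
qed

theorem corollary3p6: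
  fixes f :: "real^'n \<Rightarrow> real" and xb :: "real^'n" and r :: nat
  assumes r: "r \<ge> 1"
    and Cr: "\<exists>U. xb \<in> U \<and> Cr_on r f U"
    and low: "\<forall>x. taylor (r - 1) f xb x = f xb"
    and crit: "\<forall>x. grad (taylor r f xb) x = 0 \<longleftrightarrow> x = xb"
  shows "(\<exists>c>0. \<exists>\<delta>>0. \<forall>x\<in>cball xb \<delta>. norm (grad f x) \<ge> c * norm (x - xb) ^ (r - 1))
       \<and> (local_min_at f xb \<longleftrightarrow> local_min_at (taylor r f xb) xb)
       \<and> (local_min_at f xb \<longrightarrow>
           (\<exists>\<epsilon>>0. \<forall>h :: real^'n \<Rightarrow> real.
              (\<exists>\<rho>>0. \<forall>x\<in>cball xb \<rho>. \<bar>h x - h xb\<bar> \<le> \<epsilon> * norm (x - xb) ^ r)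
              \<longrightarrow> local_min_at (\<lambda>x. f x + h x) xb))"
proof -
  obtain U where "xb \<in> U" and f: "Cr_on (Suc (r - 1)) f U" using Cr r by auto
  define G where "G = gradient_form (\<lambda>ks. pds ks f xb) (r - 1)"
  have "grad (taylor r f xb) x = G (x - xb)" for x
    using grad_taylor_eq_gradient_form[OF low Cr_on_symmetric_partials[OF f \<open>xb \<in> U\<close>]] r
    by (simp add: G_def)
  then have nondeg: "G v = 0 \<longleftrightarrow> v = 0" for v
    using crit[rule_format, of "xb + v"] by simp
  have "1 \<le> r - 1" \<comment> \<open>for \<open>r = 1\<close> the gradient of the Taylor polynomial would be constant\<close>
  proof (rule ccontr)
    assume "\<not> 1 \<le> r - 1"
    then have "G (axis undefined 1) = G 0"
      by (simp add: G_def gradient_form_def)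
    also have "\<dots> = 0" using nondeg by simp
    finally show False using nondeg by simp
  qed
  then show ?thesis
    using grad_lower_bound_at_degenerate_point[OF f \<open>xb \<in> U\<close> low]
      local_min_criterion_at_degenerate_point[OF f \<open>xb \<in> U\<close> low] nondeg r
    by (simp add: G_def)
qed

end
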